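(* Let $\kappa$ be a regular uncountable cardinal and $I$ a $\kappa$-complete normal ideal on $\kappa$ such that the Boolean algebra $P(\kappa)/I$ is isomorphic to $\mathbb{B}(\mathrm{Add}(\omega,\lambda))$ for some cardinal $\lambda$. Then $I$ is 2-precipitous.
   Context: $\mathrm{Add}(\omega,\lambda)$ is the poset adding $\lambda$ Cohen reals (finite partial functions from $\lambda\times\omega$ to $2$, ordered by reverse inclusion), and $\mathbb{B}(\mathbb{P})$ denotes the complete Boolean algebra generated by a poset $\mathbb{P}$. Normal: closed under diagonal unions of $\kappa$-sequences. The game $G_I$: Players Empty and Nonempty alternate, Empty moving first, producing a coordinatewise $\subseteq$-decreasing sequence $\langle (A_n,B_n):n\in\omega\rangle$ of pairs of $I$-positive sets; Nonempty wins iff there exist $\alpha<\beta$ with $\alpha\in\bigcap_n A_n$, $\beta\in\bigcap_n B_n$. $I$ is 2-precipitous if Empty has no winning strategy in $G_I$. *)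

theory Defs
  imports Main
begin

text \<open>The cardinal kappa is represented by a cardinal well-order r (a relation, as in the
BNF cardinal library of Main) on the set Field r; alpha < beta means (alpha,beta) in r and
alpha differs from beta.\<close>

definition strict_lt :: "'a rel \<Rightarrow> 'a \<Rightarrow> 'a \<Rightarrow> bool" where
  "strict_lt r a b \<longleftrightarrow> (a, b) \<in> r \<and> a \<noteq> b"

definition ideal_on :: "'a rel \<Rightarrow> 'a set set \<Rightarrow> bool" where
  "ideal_on r I \<longleftrightarrow>
     I \<subseteq> Pow (Field r) \<and> {} \<in> I \<and> Field r \<notin> I \<and>
     (\<forall>A B. A \<in> I \<and> B \<subseteq> A \<longrightarrow> B \<in> I) \<and>
     (\<forall>A B. A \<in> I \<and> B \<in> I \<longrightarrow> A \<union> B \<in> I) \<and>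
     (\<forall>a \<in> Field r. {a} \<in> I)"

definition kappa_complete :: "'a rel \<Rightarrow> 'a set set \<Rightarrow> bool" where
  "kappa_complete r I \<longleftrightarrow> (\<forall>F. F \<subseteq> I \<and> (card_of F, r) \<in> ordLess \<longrightarrow> \<Union>F \<in> I)"

definition diag_union :: "'a rel \<Rightarrow> ('a \<Rightarrow> 'a set) \<Rightarrow> 'a set" where
  "diag_union r X = {b \<in> Field r. \<exists>a \<in> Field r. strict_lt r a b \<and> b \<in> X a}"

definition normal_ideal :: "'a rel \<Rightarrow> 'a set set \<Rightarrow> bool" where
  "normal_ideal r I \<longleftrightarrow> (\<forall>X. (\<forall>a \<in> Field r. X a \<in> I) \<longrightarrow> diag_union r X \<in> I)"

text \<open>Add(omega, lambda): finite partial functions from L x omega to 2, with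
p \<le> q iff p extends q (reverse inclusion).\<close>
definition Add_conds :: "'l set \<Rightarrow> ('l \<times> nat \<rightharpoonup> bool) set" where
  "Add_conds L = {p. finite (dom p) \<and> dom p \<subseteq> L \<times> UNIV}"

definition Add_le :: "('l \<times> nat \<rightharpoonup> bool) \<Rightarrow> ('l \<times> nat \<rightharpoonup> bool) \<Rightarrow> bool" where
  "Add_le p q \<longleftrightarrow> q \<subseteq>\<^sub>m p"

text \<open>The complete Boolean algebra B(P) of a poset (P, le), realised as its regular open
algebra: regular open subsets of P in the topology of downward closed sets, ordered by
inclusion.\<close>
definition regular_open :: "'p set \<Rightarrow> ('p \<Rightarrow> 'p \<Rightarrow> bool) \<Rightarrow> 'p set \<Rightarrow> bool" where
  "regular_open P le U \<longleftrightarrow> U \<subseteq> P \<and>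
     (\<forall>p \<in> P. p \<in> U \<longleftrightarrow> (\<forall>q \<in> P. le q p \<longrightarrow> (\<exists>s \<in> U. le s q)))"

definition RO :: "'p set \<Rightarrow> ('p \<Rightarrow> 'p \<Rightarrow> bool) \<Rightarrow> 'p set set" where
  "RO P le = {U. regular_open P le U}"

text \<open>P(kappa)/I is isomorphic (as a Boolean algebra, equivalently as a partial order)
to the Boolean algebra B: there is a map from P(kappa) onto B inducing an order
isomorphism of the quotient, where [A] \<le> [B] iff A - B \<in> I.\<close>
definition quotient_iso :: "'a set \<Rightarrow> 'a set set \<Rightarrow> 'b set set \<Rightarrow> bool" where
  "quotient_iso K I Bs \<longleftrightarrow> (\<exists>f. (\<forall>A \<subseteq> K. f A \<in> Bs) \<and> (\<forall>U \<in> Bs. \<exists>A \<subseteq> K. f A = U) \<and>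
      (\<forall>A B. A \<subseteq> K \<and> B \<subseteq> K \<longrightarrow> (A - B \<in> I \<longleftrightarrow> f A \<subseteq> f B)))"

text \<open>A move is a pair (A,B); moves are indexed 0,1,2,...; Empty makes the
even-numbered moves and Nonempty the odd ones.\<close>
definition legal_move :: "'a rel \<Rightarrow> 'a set set \<Rightarrow> ('a set \<times> 'a set) list \<Rightarrow> 'a set \<times> 'a set \<Rightarrow> bool" where
  "legal_move r I h m \<longleftrightarrow>
     fst m \<subseteq> Field r \<and> snd m \<subseteq> Field r \<and> fst m \<notin> I \<and> snd m \<notin> I \<and>
     (h \<noteq> [] \<longrightarrow> fst m \<subseteq> fst (last h) \<and> snd m \<subseteq> snd (last h))"

definition legal_history :: "'a rel \<Rightarrow> 'a set set \<Rightarrow> ('a set \<times> 'a set) list \<Rightarrow> bool" where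
  "legal_history r I h \<longleftrightarrow> (\<forall>n < length h. legal_move r I (take n h) (h ! n))"

text \<open>A strategy for Empty maps histories of even length to Empty's next move.\<close>
definition follows_history :: "(('a set \<times> 'a set) list \<Rightarrow> 'a set \<times> 'a set) \<Rightarrow> ('a set \<times> 'a set) list \<Rightarrow> bool" where
  "follows_history \<sigma> h \<longleftrightarrow> (\<forall>n < length h. even n \<longrightarrow> h ! n = \<sigma> (take n h))"

definition nonempty_wins :: "'a rel \<Rightarrow> (nat \<Rightarrow> 'a set \<times> 'a set) \<Rightarrow> bool" where
  "nonempty_wins r play \<longleftrightarrow>
     (\<exists>a b. strict_lt r a b \<and> a \<in> (\<Inter>n. fst (play n)) \<and> b \<in> (\<Inter>n. snd (play n)))"

definition empty_winning_strategy :: "'a rel \<Rightarrow> 'a set set \<Rightarrow> (('a set \<times> 'a set) list \<Rightarrow> 'a set \<times> 'a set) \<Rightarrow> bool" where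
  "empty_winning_strategy r I \<sigma> \<longleftrightarrow>
     (\<forall>h. legal_history r I h \<and> follows_history \<sigma> h \<and> even (length h) \<longrightarrow> legal_move r I h (\<sigma> h)) \<and>
     (\<forall>play. (\<forall>n. legal_move r I (map play [0..<n]) (play n)) \<and>
             (\<forall>n. even n \<longrightarrow> play n = \<sigma> (map play [0..<n])) \<longrightarrow> \<not> nonempty_wins r play)"

definition two_precipitous :: "'a rel \<Rightarrow> 'a set set \<Rightarrow> bool" where
  "two_precipitous r I \<longleftrightarrow> \<not> (\<exists>\<sigma>. empty_winning_strategy r I \<sigma>)"

end

theory Submission
  imports Defs "HOL-Library.Countable_Set"
begin

text \<open>Let \<sigma> be a strategy for Empty. At a position whose last move is (A, B), the moves
  (A \<inter> [a], B \<inter> [b]) of Nonempty, where [a] is the element of P(\<kappa>)/I corresponding to the cone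
  below a Cohen condition a, are coded by pairs of conditions. As conditions have finite support,
  there is a countable set S of coordinates that contains the supports of conditions in \<sigma>'s
  replies to all moves coded by conditions supported in S. Restricting Nonempty to these countably
  many moves, an amalgamation argument over S shows that for I-almost every \<alpha> \<in> A, I-almost
  every \<beta> \<in> B survives together with \<alpha> in one of the replies. The positions reachable in this
  way form a countable tree. Countable completeness of I yields \<alpha> in Empty's first set outside
  all the exceptional sets, and then \<beta> above \<alpha> (initial segments of \<kappa> are in I) outside all
  exceptional sets for \<alpha>. Both survive along a branch of the tree, which is a play won by
  Nonempty.\<close>

unbundle cardinal_syntax

section \<open>Consequences of \<kappa>-completeness\<close>

lemma kappa_complete_countable_Union:
  assumes "kappa_complete r I" and "(natLeq, r) \<in> ordLess"
    and "countable F" and "F \<subseteq> I"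
  shows "\<Union>F \<in> I"
proof -
  have "|F| \<le>o |UNIV :: nat set|"
    using \<open>countable F\<close> card_of_ordLeq countable_def by blast
  then have "|F| \<le>o natLeq"
    using card_of_nat ordLeq_ordIso_trans by blast
  then have "|F| <o r"
    using assms(2) ordLeq_ordLess_trans by blast
  then show ?thesis
    using assms(1,4) unfolding kappa_complete_def by blast
qed

lemma kappa_complete_under_in_ideal:
  assumes "Card_order r" and "kappa_complete r I" and "ideal_on r I" and "a \<in> Field r"
  shows "under r a \<in> I"
proof -
  let ?F = "(\<lambda>b. {b}) ` underS r a"
  have "|?F| <o r"
    using card_of_image card_of_underS[OF assms(1,4)] ordLeq_ordLess_trans by blast
  moreover have "?F \<subseteq> I"
    using assms(3) unfolding ideal_on_def underS_def by (auto simp: Field_def)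
  ultimately have "underS r a \<in> I"
    using assms(2) unfolding kappa_complete_def by auto
  then have "underS r a \<union> {a} \<in> I"
    using assms(3,4) unfolding ideal_on_def by blast
  moreover have "under r a \<subseteq> underS r a \<union> {a}"
    unfolding under_def underS_def by auto
  ultimately show ?thesis
    using assms(3) unfolding ideal_on_def by blast
qed

lemma strict_lt_if_not_under:
  assumes "Card_order r" and "a \<in> Field r" and "b \<in> Field r" and "b \<notin> under r a"
  shows "strict_lt r a b"
proof -
  have "Total r" and "Refl r"
    using assms(1) unfolding card_order_on_def well_order_on_def linear_order_on_def
      partial_order_on_def preorder_on_def by blast+
  moreover have "(b, a) \<notin> r"
    using assms(4) unfolding under_def by blast
  ultimately show ?thesis
    using assms(2,3) unfolding strict_lt_def total_on_def refl_on_def by metis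
qed

section \<open>Countable closures\<close>

lemma finite_subset_mono_Union:
  assumes "mono C" and "finite F" and "F \<subseteq> (\<Union>n. C n)"
  shows "\<exists>n. F \<subseteq> C (n :: nat)"
  using assms(2,3)
proof (induction F rule: finite_induct)
  case empty
  then show ?case by blast
next
  case (insert x F)
  then obtain n m where "F \<subseteq> C n" and "x \<in> C m"
    by blast
  moreover have "C n \<subseteq> C (max n m)" and "C m \<subseteq> C (max n m)"
    using \<open>mono C\<close> by (simp_all add: monoD)
  ultimately show ?case by blast
qed

lemma countable_closure:
  fixes supp D :: "'x \<Rightarrow> 'c set"
  assumes countable_supported: "\<And>S. countable S \<Longrightarrow> countable {x \<in> X. supp x \<subseteq> S}"
    and finite_supp: "\<And>x. x \<in> X \<Longrightarrow> finite (supp x)"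
    and countable_D: "\<And>x. x \<in> X \<Longrightarrow> countable (D x)"
  shows "\<exists>S. countable S \<and> (\<forall>x \<in> X. supp x \<subseteq> S \<longrightarrow> D x \<subseteq> S)"
proof -
  define g where "g S = S \<union> \<Union>(D ` {x \<in> X. supp x \<subseteq> S})" for S
  define C where "C n = (g ^^ n) {}" for n
  have C_Suc: "C (Suc n) = g (C n)" for n
    unfolding C_def by simp
  have "countable (C n)" for n
  proof (induction n)
    case 0
    then show ?case unfolding C_def by simp
  next
    case (Suc n)
    then show ?case
      unfolding C_Suc g_def using countable_supported countable_D
      by (intro countable_Un countable_UN) auto
  qed
  then have "countable (\<Union>n. C n)"
    by (intro countable_UN) auto
  moreover have "D x \<subseteq> (\<Union>n. C n)" if x: "x \<in> X" and supp_x: "supp x \<subseteq> (\<Union>n. C n)" for x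
  proof -
    have "mono C"
      unfolding mono_iff_le_Suc C_Suc g_def by blast
    then obtain n where "supp x \<subseteq> C n"
      using finite_subset_mono_Union[OF _ finite_supp[OF x] supp_x] by blast
    then have "D x \<subseteq> C (Suc n)"
      using x unfolding C_Suc g_def by blast
    then show ?thesis by blast
  qed
  ultimately show ?thesis by (intro exI[of _ "\<Union>n. C n"]) blast
qed

section \<open>Cohen conditions\<close>

lemma Add_le_refl: "Add_le p p"
  unfolding Add_le_def by simp

lemma Add_le_trans: "Add_le p q \<Longrightarrow> Add_le q s \<Longrightarrow> Add_le p s"
  unfolding Add_le_def using map_le_trans by blast

definition cone :: "'l set \<Rightarrow> ('l \<times> nat \<rightharpoonup> bool) \<Rightarrow> ('l \<times> nat \<rightharpoonup> bool) set" where
  "cone L s = {q \<in> Add_conds L. Add_le q s}"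

lemma regular_open_empty: "regular_open (Add_conds L) Add_le {}"
  unfolding regular_open_def using Add_le_refl by blast

lemma regular_open_downward_closed:
  assumes "regular_open (Add_conds L) Add_le U" and "p \<in> U"
    and "q \<in> Add_conds L" and "Add_le q p"
  shows "q \<in> U"
proof -
  have "\<forall>q' \<in> Add_conds L. Add_le q' q \<longrightarrow> (\<exists>s \<in> U. Add_le s q')"
    using assms unfolding regular_open_def by (meson Add_le_trans subsetD)
  then show ?thesis
    using assms unfolding regular_open_def by blast
qed

lemma regular_open_cone:
  assumes s: "s \<in> Add_conds L"
  shows "regular_open (Add_conds L) Add_le (cone L s)"
proof -
  have "p \<in> cone L s"
    if p: "p \<in> Add_conds L"
      and dense: "\<forall>q \<in> Add_conds L. Add_le q p \<longrightarrow> (\<exists>t \<in> cone L s. Add_le t q)" for p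
  proof (rule ccontr)
    assume "p \<notin> cone L s"
    then obtain x b where x: "s x = Some b" and "p x \<noteq> Some b"
      using p unfolding cone_def Add_le_def map_le_def by fastforce
    define q where "q = [x \<mapsto> \<not> b] ++ p"
    have "q \<in> Add_conds L"
      using p s x unfolding q_def Add_conds_def by auto
    moreover have "Add_le q p"
      unfolding q_def Add_le_def by (rule map_le_map_add)
    ultimately obtain t where "Add_le t s" and "Add_le t q"
      using dense unfolding cone_def by blast
    moreover have "x \<in> dom q"
      unfolding q_def by simp
    ultimately have "q x = Some b"
      using x unfolding Add_le_def map_le_def by (metis domI)
    moreover have "q x \<noteq> Some b"
      using \<open>p x \<noteq> Some b\<close> unfolding q_def by (auto simp: map_add_def split: option.split)
    ultimately show False by simp
  qed
  then show ?thesis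
    unfolding regular_open_def cone_def using Add_le_refl Add_le_trans by blast
qed

definition supported_conds :: "'l set \<Rightarrow> 'l set \<Rightarrow> ('l \<times> nat \<rightharpoonup> bool) set" where
  "supported_conds L S = {p \<in> Add_conds L. fst ` dom p \<subseteq> S}"

lemma restrict_supported_conds:
  assumes "q \<in> Add_conds L"
  shows "q |` (S \<times> UNIV) \<in> supported_conds L S" and "Add_le q (q |` (S \<times> UNIV))"
proof -
  have "dom (q |` (S \<times> UNIV)) \<subseteq> dom q"
    by auto
  then show "q |` (S \<times> UNIV) \<in> supported_conds L S"
    using assms unfolding supported_conds_def Add_conds_def by (auto intro: finite_subset)
  show "Add_le q (q |` (S \<times> UNIV))"
    unfolding Add_le_def map_le_def by simp
qed

lemma map_add_common_extension:
  assumes q: "q \<in> Add_conds L" and e: "e \<in> supported_conds L S"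
    and e_ext: "Add_le e (q |` (S \<times> UNIV))"
  shows "q ++ e \<in> Add_conds L" and "Add_le (q ++ e) q" and "Add_le (q ++ e) e"
proof -
  show "q ++ e \<in> Add_conds L"
    using q e unfolding supported_conds_def Add_conds_def by auto
  show "Add_le (q ++ e) e"
    unfolding Add_le_def by (rule map_le_map_add)
  have "q x = e x" if "x \<in> dom q" and "x \<in> dom e" for x
  proof -
    have "x \<in> S \<times> UNIV"
      using that(2) e unfolding supported_conds_def by (cases x) force
    then show ?thesis
      using that(1) e_ext unfolding Add_le_def map_le_def by force
  qed
  then show "Add_le (q ++ e) q"
    unfolding Add_le_def map_le_def by (metis domIff map_add_dom_app_simps(1,3))
qed

lemma supported_conds_subset: "supported_conds L S \<subseteq> Add_conds L"
  unfolding supported_conds_def by blast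

lemma countable_supported_conds:
  assumes "countable S"
  shows "countable (supported_conds L S)"
proof -
  have "Map.graph ` supported_conds L S \<subseteq> {G. finite G \<and> G \<subseteq> (S \<times> UNIV) \<times> UNIV}"
    unfolding supported_conds_def Add_conds_def by (fastforce dest: graph_domD)
  moreover have "countable {G. finite G \<and> G \<subseteq> (S \<times> (UNIV :: nat set)) \<times> (UNIV :: bool set)}"
    using assms by (intro countable_Collect_finite_subset) simp
  ultimately have "countable (Map.graph ` supported_conds L S)"
    using countable_subset by blast
  moreover have "inj_on Map.graph (supported_conds L S)"
    by (rule inj_onI) (metis in_graphD in_graphI not_None_eq ext)
  ultimately show ?thesis
    using countable_image_inj_on by blast
qed

lemma countable_support_closure:
  fixes L :: "'l set" and e e' :: "('l \<times> nat \<rightharpoonup> bool) \<Rightarrow> ('l \<times> nat \<rightharpoonup> bool) \<Rightarrow> ('l \<times> nat \<rightharpoonup> bool)"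
  assumes "legal \<subseteq> Add_conds L \<times> Add_conds L"
    and "\<And>a b. (a, b) \<in> legal \<Longrightarrow> e a b \<in> Add_conds L \<and> e' a b \<in> Add_conds L"
  shows "\<exists>S. countable S \<and> (\<forall>a b. (a, b) \<in> legal \<longrightarrow>
    a \<in> supported_conds L S \<longrightarrow> b \<in> supported_conds L S \<longrightarrow>
    e a b \<in> supported_conds L S \<and> e' a b \<in> supported_conds L S)"
proof -
  define supp where "supp ab = fst ` dom (fst ab) \<union> fst ` dom (snd ab)"
    for ab :: "('l \<times> nat \<rightharpoonup> bool) \<times> ('l \<times> nat \<rightharpoonup> bool)"
  have "\<exists>S. countable S \<and>
      (\<forall>ab \<in> legal. supp ab \<subseteq> S \<longrightarrow> supp (case_prod e ab, case_prod e' ab) \<subseteq> S)"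
  proof (rule countable_closure)
    fix S :: "'l set"
    assume "countable S"
    then have "countable (supported_conds L S \<times> supported_conds L S)"
      using countable_supported_conds by blast
    moreover have "{ab \<in> legal. supp ab \<subseteq> S} \<subseteq> supported_conds L S \<times> supported_conds L S"
      using assms(1) unfolding supp_def supported_conds_def by (auto simp: image_subset_iff)
    ultimately show "countable {ab \<in> legal. supp ab \<subseteq> S}"
      using countable_subset by blast
  next
    fix ab
    assume "ab \<in> legal"
    then obtain a b where ab: "ab = (a, b)" and "(a, b) \<in> legal"
      by (cases ab) simp
    then have "a \<in> Add_conds L" "b \<in> Add_conds L" "e a b \<in> Add_conds L" "e' a b \<in> Add_conds L"
      using assms by auto
    then show "finite (supp ab)" and "countable (supp (case_prod e ab, case_prod e' ab))"
      unfolding ab supp_def Add_conds_def by (simp_all add: countable_finite)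
  qed
  then obtain S where "countable S"
    and closed: "\<forall>ab \<in> legal. supp ab \<subseteq> S \<longrightarrow> supp (case_prod e ab, case_prod e' ab) \<subseteq> S"
    by blast
  have "e a b \<in> supported_conds L S \<and> e' a b \<in> supported_conds L S"
    if "(a, b) \<in> legal" and "a \<in> supported_conds L S" and "b \<in> supported_conds L S" for a b
    using bspec[OF closed that(1)] that(2,3) assms(2)[OF that(1)]
    unfolding supp_def supported_conds_def by simp
  then show ?thesis
    using \<open>countable S\<close> by (intro exI[of _ S]) simp
qed

section \<open>P(\<kappa>)/I as the Cohen algebra\<close>

definition refines :: "'a set set \<Rightarrow> 'a set \<times> 'a set \<Rightarrow> 'a set \<times> 'a set \<Rightarrow> bool" where
  "refines I Y X \<longleftrightarrow> fst Y \<subseteq> fst X \<and> snd Y \<subseteq> snd X \<and> fst Y \<notin> I \<and> snd Y \<notin> I"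

definition uncovered ::
    "'a set \<Rightarrow> ('a set \<times> 'a set) set \<Rightarrow> ('a set \<times> 'a set \<Rightarrow> 'a set \<times> 'a set) \<Rightarrow> 'a \<Rightarrow> 'a set" where
  "uncovered B YS G \<alpha> = {\<beta> \<in> B. \<forall>Y \<in> YS. \<alpha> \<in> fst (G Y) \<longrightarrow> \<beta> \<notin> snd (G Y)}"

lemma uncovered_subset: "uncovered B YS G \<alpha> \<subseteq> B"
  unfolding uncovered_def by blast

text \<open>G Y stands for Empty's reply to a move Y of Nonempty below X. Nonempty can restrict
  himself to countably many moves YS such that, for I-almost all \<alpha> in fst X, I-almost all
  \<beta> in snd X survive together with \<alpha> the reply to one of these moves.\<close>
definition countably_covers_responses :: "'a set \<Rightarrow> 'a set set \<Rightarrow> bool" where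
  "countably_covers_responses K I \<longleftrightarrow>
     (\<forall>X G. fst X \<subseteq> K \<and> snd X \<subseteq> K \<and> (\<forall>Y. refines I Y X \<longrightarrow> refines I (G Y) Y) \<longrightarrow>
        (\<exists>YS N. countable YS \<and> (\<forall>Y \<in> YS. refines I Y X) \<and> N \<in> I \<and>
           (\<forall>\<alpha> \<in> fst X - N. uncovered (snd X) YS G \<alpha> \<in> I)))"

lemma countably_covers_responsesD:
  assumes "countably_covers_responses K I" and "fst X \<subseteq> K" and "snd X \<subseteq> K"
    and "\<And>Y. refines I Y X \<Longrightarrow> refines I (G Y) Y"
  shows "\<exists>YS N. countable YS \<and> (\<forall>Y \<in> YS. refines I Y X) \<and> N \<in> I \<and>
    (\<forall>\<alpha> \<in> fst X - N. uncovered (snd X) YS G \<alpha> \<in> I)"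
proof -
  have "fst X \<subseteq> K \<and> snd X \<subseteq> K \<and> (\<forall>Y. refines I Y X \<longrightarrow> refines I (G Y) Y)"
    using assms(2-4) by blast
  with assms(1) show ?thesis
    unfolding countably_covers_responses_def by (elim allE[of _ X] allE[of _ G] mp)
qed

locale cohen_quotient =
  fixes K :: "'a set" and I :: "'a set set" and L :: "'l set"
    and f :: "'a set \<Rightarrow> ('l \<times> nat \<rightharpoonup> bool) set"
  assumes ideal_down: "A \<in> I \<Longrightarrow> B \<subseteq> A \<Longrightarrow> B \<in> I"
    and countable_Union_in_ideal: "countable F \<Longrightarrow> F \<subseteq> I \<Longrightarrow> \<Union>F \<in> I"
    and regular_open_image: "X \<subseteq> K \<Longrightarrow> regular_open (Add_conds L) Add_le (f X)"
    and regular_open_preimage: "regular_open (Add_conds L) Add_le U \<Longrightarrow> \<exists>X \<subseteq> K. f X = U"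
    and diff_in_ideal_iff: "X \<subseteq> K \<Longrightarrow> Y \<subseteq> K \<Longrightarrow> X - Y \<in> I \<longleftrightarrow> f X \<subseteq> f Y"
begin

lemma empty_in_ideal: "{} \<in> I"
  using countable_Union_in_ideal[of "{}"] by simp

lemma positive_nonempty: "X \<notin> I \<Longrightarrow> X \<noteq> {}"
  using empty_in_ideal by blast

lemma Un_in_ideal: "A \<in> I \<Longrightarrow> B \<in> I \<Longrightarrow> A \<union> B \<in> I"
  using countable_Union_in_ideal[of "{A, B}"] by simp

lemma f_empty: "f {} = {}"
proof -
  obtain X where "X \<subseteq> K" and "f X = {}"
    using regular_open_preimage[OF regular_open_empty] by blast
  then show ?thesis
    using diff_in_ideal_iff[of "{}" X] empty_in_ideal by auto
qed

lemma f_subset: "X \<subseteq> K \<Longrightarrow> f X \<subseteq> Add_conds L"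
  using regular_open_image unfolding regular_open_def by blast

lemma f_mono: "X \<subseteq> Y \<Longrightarrow> Y \<subseteq> K \<Longrightarrow> f X \<subseteq> f Y"
  using diff_in_ideal_iff[of X Y] empty_in_ideal by (metis Diff_eq_empty_iff subset_trans)

lemma f_nonempty: "X \<subseteq> K \<Longrightarrow> X \<notin> I \<Longrightarrow> f X \<noteq> {}"
  using diff_in_ideal_iff[of X "{}"] f_empty by auto

lemma f_downward_closed:
  "X \<subseteq> K \<Longrightarrow> p \<in> f X \<Longrightarrow> q \<in> Add_conds L \<Longrightarrow> Add_le q p \<Longrightarrow> q \<in> f X"
  using regular_open_image regular_open_downward_closed by blast

definition cone_preimage :: "('l \<times> nat \<rightharpoonup> bool) \<Rightarrow> 'a set" where
  "cone_preimage s = (SOME X. X \<subseteq> K \<and> f X = cone L s)"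

lemma cone_preimage:
  assumes "s \<in> Add_conds L"
  shows "cone_preimage s \<subseteq> K" and "f (cone_preimage s) = cone L s"
proof -
  have "\<exists>X. X \<subseteq> K \<and> f X = cone L s"
    using regular_open_preimage[OF regular_open_cone[OF assms]] by blast
  then have "cone_preimage s \<subseteq> K \<and> f (cone_preimage s) = cone L s"
    unfolding cone_preimage_def by (rule someI_ex)
  then show "cone_preimage s \<subseteq> K" and "f (cone_preimage s) = cone L s"
    by auto
qed

lemma condition_below_if_subset_cone_preimage:
  assumes "a \<in> Add_conds L" and "Z \<subseteq> cone_preimage a" and "Z \<notin> I"
  shows "\<exists>e. e \<in> f Z \<and> Add_le e a \<and> e \<in> Add_conds L"
proof -
  obtain e where "e \<in> f Z"
    using f_nonempty assms cone_preimage(1) by blast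
  moreover have "f Z \<subseteq> cone L a"
    using f_mono[OF assms(2) cone_preimage(1)] cone_preimage(2) assms(1) by simp
  ultimately show ?thesis
    unfolding cone_def by blast
qed

lemma f_Int:
  assumes X: "X \<subseteq> K" and Y: "Y \<subseteq> K" and "t \<in> f X" and "t \<in> f Y"
  shows "t \<in> f (X \<inter> Y)"
proof (rule ccontr)
  assume "t \<notin> f (X \<inter> Y)"
  moreover have "t \<in> Add_conds L"
    using \<open>t \<in> f X\<close> f_subset X by blast
  ultimately obtain q where q: "q \<in> Add_conds L" "Add_le q t"
    and incompatible: "\<forall>s \<in> f (X \<inter> Y). \<not> Add_le s q"
    using regular_open_image[of "X \<inter> Y"] X unfolding regular_open_def by blast
  have "cone L q \<subseteq> f X" and "cone L q \<subseteq> f Y"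
    using q assms f_downward_closed Add_le_trans unfolding cone_def by blast+
  then have "cone_preimage q - X \<in> I" and "cone_preimage q - Y \<in> I"
    using diff_in_ideal_iff cone_preimage[OF q(1)] X Y by auto
  then have "cone_preimage q - (X \<inter> Y) \<in> I"
    using Un_in_ideal by (simp add: Diff_Int)
  then have "cone L q \<subseteq> f (X \<inter> Y)"
    using diff_in_ideal_iff[of _ "X \<inter> Y"] cone_preimage[OF q(1)] X by auto
  moreover have "q \<in> cone L q"
    using q Add_le_refl unfolding cone_def by blast
  ultimately show False
    using incompatible Add_le_refl by blast
qed

lemma Int_positive_if_common_condition:
  assumes "X \<subseteq> K" and "Y \<subseteq> K" and "t \<in> f X" and "t \<in> f Y"
  shows "X \<inter> Y \<notin> I"
  using f_Int[OF assms] diff_in_ideal_iff[of "X \<inter> Y" "{}"] assms(1) f_empty by auto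

lemma Int_cone_preimage_positive:
  assumes "X \<subseteq> K" and "t \<in> f X" and "a \<in> Add_conds L" and "Add_le t a"
  shows "X \<inter> cone_preimage a \<notin> I"
proof -
  have "t \<in> cone L a"
    using assms f_subset unfolding cone_def by blast
  then show ?thesis
    using Int_positive_if_common_condition[OF assms(1) cone_preimage(1)[OF assms(3)] assms(2)]
      cone_preimage(2)[OF assms(3)] by blast
qed

lemma Int_positive_if_compatible:
  assumes "X \<subseteq> K" and "Y \<subseteq> K" and "q \<in> f X" and "e \<in> f Y"
    and "e \<in> supported_conds L S" and "Add_le e (q |` (S \<times> UNIV))"
  shows "X \<inter> Y \<notin> I"
proof -
  have "q \<in> Add_conds L"
    using assms(1,3) f_subset by blast
  note common = map_add_common_extension[OF this assms(5,6)]
  show ?thesis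
    using Int_positive_if_common_condition[OF assms(1,2)]
      f_downward_closed[OF assms(1,3) common(1,2)] f_downward_closed[OF assms(2,4) common(1,3)]
    by blast
qed

lemma positive_fiber:
  assumes "N \<notin> I" and "countable V" and "\<And>\<alpha>. \<alpha> \<in> N \<Longrightarrow> g \<alpha> \<in> V"
  shows "\<exists>v \<in> V. {\<alpha> \<in> N. g \<alpha> = v} \<notin> I"
proof (rule ccontr)
  assume "\<not> ?thesis"
  then have "\<Union>((\<lambda>v. {\<alpha> \<in> N. g \<alpha> = v}) ` V) \<in> I"
    using assms(2) by (intro countable_Union_in_ideal) auto
  moreover have "N \<subseteq> \<Union>((\<lambda>v. {\<alpha> \<in> N. g \<alpha> = v}) ` V)"
    using assms(3) by blast
  ultimately show False
    using assms(1) ideal_down by blast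
qed

lemma uncovered_null_almost_everywhere:
  assumes A: "A \<subseteq> K" and B: "B \<subseteq> K" and "countable S"
    and responses: "\<And>Y. Y \<in> YS \<Longrightarrow> fst (G Y) \<subseteq> K \<and> snd (G Y) \<subseteq> K"
    and dense: "\<And>a b. a \<in> supported_conds L S \<Longrightarrow> b \<in> supported_conds L S \<Longrightarrow>
      A \<inter> cone_preimage a \<notin> I \<Longrightarrow> B \<inter> cone_preimage b \<notin> I \<Longrightarrow>
      \<exists>Y \<in> YS. \<exists>e e'. e \<in> f (fst (G Y)) \<and> e' \<in> f (snd (G Y)) \<and> Add_le e a \<and> Add_le e' b \<and>
        e \<in> supported_conds L S \<and> e' \<in> supported_conds L S"
  shows "{\<alpha> \<in> A. uncovered B YS G \<alpha> \<notin> I} \<in> I"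
    (is "{\<alpha> \<in> A. ?C \<alpha> \<notin> I} \<in> I")
proof (rule ccontr)
  define N where "N = {\<alpha> \<in> A. ?C \<alpha> \<notin> I}"
  assume "N \<notin> I"
  have C: "?C \<alpha> \<subseteq> K" for \<alpha>
    using uncovered_subset B by (rule subset_trans)
  define q where "q \<alpha> = (SOME t. t \<in> f (?C \<alpha>))" for \<alpha>
  have q: "q \<alpha> \<in> f (?C \<alpha>)" if "\<alpha> \<in> N" for \<alpha>
    using f_nonempty[OF C] that unfolding q_def N_def by (simp add: some_in_eq)
  then have q_cond: "q \<alpha> \<in> Add_conds L" if "\<alpha> \<in> N" for \<alpha>
    using that f_subset[OF C] by blast
  txt \<open>Countably many conditions are supported in S, so on a positive set of points
    the conditions q agree on S.\<close>
  have "\<exists>p \<in> supported_conds L S. {\<alpha> \<in> N. q \<alpha> |` (S \<times> UNIV) = p} \<notin> I"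
    using q_cond restrict_supported_conds(1)
    by (intro positive_fiber[OF \<open>N \<notin> I\<close> countable_supported_conds[OF \<open>countable S\<close>]]) blast
  then obtain p where p: "p \<in> supported_conds L S" and "{\<alpha> \<in> N. q \<alpha> |` (S \<times> UNIV) = p} \<notin> I"
    by blast
  moreover define X where "X = {\<alpha> \<in> N. q \<alpha> |` (S \<times> UNIV) = p}"
  ultimately have "X \<notin> I"
    by simp
  have X: "X \<subseteq> K" "X \<subseteq> A"
    using A unfolding X_def N_def by blast+
  obtain r0 where r0: "r0 \<in> f X"
    using f_nonempty[OF X(1) \<open>X \<notin> I\<close>] by blast
  define a where "a = r0 |` (S \<times> UNIV)"
  have r0_cond: "r0 \<in> Add_conds L"
    using r0 f_subset[OF X(1)] by blast
  note a = restrict_supported_conds[OF r0_cond, of S, folded a_def]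
  have a_cond: "a \<in> Add_conds L" and p_cond: "p \<in> Add_conds L"
    using a(1) p supported_conds_subset by blast+
  have "A \<inter> cone_preimage a \<notin> I"
    using Int_cone_preimage_positive[OF A f_mono[OF X(2) A, THEN subsetD, OF r0] a_cond a(2)] .
  moreover have "B \<inter> cone_preimage p \<notin> I"
  proof -
    obtain \<alpha> where "\<alpha> \<in> N" and "q \<alpha> |` (S \<times> UNIV) = p"
      using positive_nonempty[OF \<open>X \<notin> I\<close>] unfolding X_def by blast
    then have "q \<alpha> \<in> f B" and "Add_le (q \<alpha>) p"
      using f_mono[OF uncovered_subset B, THEN subsetD, OF q] restrict_supported_conds(2)[OF q_cond]
      by auto
    then show ?thesis
      by (rule Int_cone_preimage_positive[OF B _ p_cond])
  qed
  ultimately obtain Y e e' where Y: "Y \<in> YS"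
    and e: "e \<in> f (fst (G Y))" "Add_le e a" "e \<in> supported_conds L S"
    and e': "e' \<in> f (snd (G Y))" "Add_le e' p" "e' \<in> supported_conds L S"
    by (elim dense[OF a(1) p, elim_format] bexE exE conjE)
  txt \<open>Conditions that agree on S are compatible with every condition supported in S
    that extends their common restriction.\<close>
  have "X \<inter> fst (G Y) \<notin> I"
    using Int_positive_if_compatible[OF X(1) _ r0 e(1) e(3)] responses[OF Y] e(2)
    unfolding a_def by blast
  then obtain \<alpha> where "\<alpha> \<in> X" and \<alpha>: "\<alpha> \<in> fst (G Y)"
    using positive_nonempty by blast
  then have "\<alpha> \<in> N" and "Add_le e' (q \<alpha> |` (S \<times> UNIV))"
    using e'(2) unfolding X_def by auto
  then have "?C \<alpha> \<inter> snd (G Y) \<notin> I"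
    using Int_positive_if_compatible[OF C _ q e'(1) e'(3)] responses[OF Y] by blast
  then obtain \<beta> where "\<beta> \<in> ?C \<alpha>" and "\<beta> \<in> snd (G Y)"
    using positive_nonempty by blast
  then show False
    using Y \<alpha> unfolding uncovered_def by blast
qed

lemma countably_covers_responses: "countably_covers_responses K I"
  unfolding countably_covers_responses_def
proof (intro allI impI)
  fix X :: "'a set \<times> 'a set" and G
  assume "fst X \<subseteq> K \<and> snd X \<subseteq> K \<and> (\<forall>Y. refines I Y X \<longrightarrow> refines I (G Y) Y)"
  then have A: "fst X \<subseteq> K" and B: "snd X \<subseteq> K"
    and G: "\<And>Y. refines I Y X \<Longrightarrow> refines I (G Y) Y"
    by auto
  define move where "move a b = (fst X \<inter> cone_preimage a, snd X \<inter> cone_preimage b)" for a b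
  define legal where "legal = {(a, b). a \<in> Add_conds L \<and> b \<in> Add_conds L \<and> refines I (move a b) X}"
  define e where "e a b = (SOME e. e \<in> f (fst (G (move a b))) \<and> Add_le e a \<and> e \<in> Add_conds L)"
    for a b
  define e' where "e' a b = (SOME e. e \<in> f (snd (G (move a b))) \<and> Add_le e b \<and> e \<in> Add_conds L)"
    for a b
  have reply: "e a b \<in> f (fst (G (move a b))) \<and> Add_le (e a b) a \<and> e a b \<in> Add_conds L \<and>
      e' a b \<in> f (snd (G (move a b))) \<and> Add_le (e' a b) b \<and> e' a b \<in> Add_conds L"
    if "(a, b) \<in> legal" for a b
  proof -
    have a: "a \<in> Add_conds L" and b: "b \<in> Add_conds L" and "refines I (G (move a b)) (move a b)"
      using that G unfolding legal_def by auto
    then have "fst (G (move a b)) \<subseteq> cone_preimage a" "fst (G (move a b)) \<notin> I"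
      and "snd (G (move a b)) \<subseteq> cone_preimage b" "snd (G (move a b)) \<notin> I"
      unfolding refines_def move_def by auto
    then have "\<exists>e. e \<in> f (fst (G (move a b))) \<and> Add_le e a \<and> e \<in> Add_conds L"
      and "\<exists>e. e \<in> f (snd (G (move a b))) \<and> Add_le e b \<and> e \<in> Add_conds L"
      using condition_below_if_subset_cone_preimage[OF a] condition_below_if_subset_cone_preimage[OF b]
      by simp_all
    from someI_ex[OF this(1)] someI_ex[OF this(2)] show ?thesis
      unfolding e_def e'_def by blast
  qed
  have "legal \<subseteq> Add_conds L \<times> Add_conds L"
    unfolding legal_def by blast
  moreover have "e a b \<in> Add_conds L \<and> e' a b \<in> Add_conds L" if "(a, b) \<in> legal" for a b
    using reply[OF that] by blast
  ultimately have "\<exists>S. countable S \<and> (\<forall>a b. (a, b) \<in> legal \<longrightarrow>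
      a \<in> supported_conds L S \<longrightarrow> b \<in> supported_conds L S \<longrightarrow>
      e a b \<in> supported_conds L S \<and> e' a b \<in> supported_conds L S)"
    by (rule countable_support_closure[of legal L e e'])
  then obtain S where "countable S" and closed: "\<forall>a b. (a, b) \<in> legal \<longrightarrow>
      a \<in> supported_conds L S \<longrightarrow> b \<in> supported_conds L S \<longrightarrow>
      e a b \<in> supported_conds L S \<and> e' a b \<in> supported_conds L S"
    by blast
  define YS where "YS = {move a b | a b. (a, b) \<in> legal \<and> a \<in> supported_conds L S \<and> b \<in> supported_conds L S}"
  have "countable YS"
  proof -
    have "YS \<subseteq> case_prod move ` (supported_conds L S \<times> supported_conds L S)"
      unfolding YS_def by blast
    moreover have "countable (case_prod move ` (supported_conds L S \<times> supported_conds L S))"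
      using countable_supported_conds[OF \<open>countable S\<close>] by blast
    ultimately show ?thesis
      by (rule countable_subset)
  qed
  moreover have "\<forall>Y \<in> YS. refines I Y X"
    unfolding YS_def legal_def by blast
  moreover have "{\<alpha> \<in> fst X. uncovered (snd X) YS G \<alpha> \<notin> I} \<in> I"
  proof (rule uncovered_null_almost_everywhere[OF A B \<open>countable S\<close>, of YS G])
    fix Y
    assume "Y \<in> YS"
    then have "refines I Y X"
      unfolding YS_def legal_def by blast
    then have "refines I (G Y) Y" and "refines I Y X"
      using G by blast+
    then show "fst (G Y) \<subseteq> K \<and> snd (G Y) \<subseteq> K"
      using A B unfolding refines_def by blast
  next
    fix a b
    assume supported: "a \<in> supported_conds L S" "b \<in> supported_conds L S"
      and "fst X \<inter> cone_preimage a \<notin> I" "snd X \<inter> cone_preimage b \<notin> I"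
    then have ab: "(a, b) \<in> legal"
      using supported_conds_subset unfolding legal_def refines_def move_def by auto
    with supported have "move a b \<in> YS"
      unfolding YS_def by blast
    then show "\<exists>Y \<in> YS. \<exists>e e'. e \<in> f (fst (G Y)) \<and> e' \<in> f (snd (G Y)) \<and>
        Add_le e a \<and> Add_le e' b \<and> e \<in> supported_conds L S \<and> e' \<in> supported_conds L S"
      using reply[OF ab] closed[rule_format, OF ab supported] by blast
  qed
  ultimately show "\<exists>YS N. countable YS \<and> (\<forall>Y \<in> YS. refines I Y X) \<and> N \<in> I \<and>
      (\<forall>\<alpha> \<in> fst X - N. uncovered (snd X) YS G \<alpha> \<in> I)"
    by blast
qed

end

lemma quotient_iso_cohen_quotient:
  assumes "ideal_on r I" and countable_Union: "\<And>F. countable F \<Longrightarrow> F \<subseteq> I \<Longrightarrow> \<Union>F \<in> I"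
    and "quotient_iso (Field r) I (RO (Add_conds L) Add_le)"
  obtains f where "cohen_quotient (Field r) I L f"
proof -
  obtain f where f_RO: "\<forall>A \<subseteq> Field r. f A \<in> RO (Add_conds L) Add_le"
    and f_onto: "\<forall>U \<in> RO (Add_conds L) Add_le. \<exists>A \<subseteq> Field r. f A = U"
    and f_iso: "\<forall>A B. A \<subseteq> Field r \<and> B \<subseteq> Field r \<longrightarrow> (A - B \<in> I \<longleftrightarrow> f A \<subseteq> f B)"
    using assms(3) unfolding quotient_iso_def by blast
  have "cohen_quotient (Field r) I L f"
  proof
    show "\<And>A B. A \<in> I \<Longrightarrow> B \<subseteq> A \<Longrightarrow> B \<in> I"
      using assms(1) unfolding ideal_on_def by blast
    show "\<And>F. countable F \<Longrightarrow> F \<subseteq> I \<Longrightarrow> \<Union>F \<in> I"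
      by (rule countable_Union)
    show "\<And>X. X \<subseteq> Field r \<Longrightarrow> regular_open (Add_conds L) Add_le (f X)"
      using f_RO unfolding RO_def by blast
    show "\<And>U. regular_open (Add_conds L) Add_le U \<Longrightarrow> \<exists>X \<subseteq> Field r. f X = U"
      using f_onto unfolding RO_def by blast
    show "\<And>X Y. X \<subseteq> Field r \<Longrightarrow> Y \<subseteq> Field r \<Longrightarrow> X - Y \<in> I \<longleftrightarrow> f X \<subseteq> f Y"
      using f_iso by blast
  qed
  then show thesis
    by (rule that)
qed

section \<open>The game\<close>

lemma extending_lists_prefix:
  assumes "\<And>n. \<exists>t. xs (Suc n) = xs n @ t" and "n \<le> m"
  shows "\<exists>t. xs m = xs n @ t"
  using assms(2)
proof (induction m rule: dec_induct)
  case base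
  then show ?case by simp
next
  case (step m)
  then show ?case
    using assms(1)[of m] by force
qed

lemma extending_lists_diagonal:
  assumes "\<And>n. \<exists>t. xs (Suc n) = xs n @ t" and "\<And>n. n < length (xs n)"
  shows "map (\<lambda>k. xs k ! k) [0..<n] = take n (xs n)"
proof (rule nth_equalityI)
  show "length (map (\<lambda>k. xs k ! k) [0..<n]) = length (take n (xs n))"
    using assms(2)[of n] by simp
next
  fix i
  assume "i < length (map (\<lambda>k. xs k ! k) [0..<n])"
  then have "i < n"
    by simp
  then obtain t where "xs n = xs i @ t"
    using extending_lists_prefix[of xs i n] assms(1) by fastforce
  then show "map (\<lambda>k. xs k ! k) [0..<n] ! i = take n (xs n) ! i"
    using \<open>i < n\<close> assms(2)[of i] by (simp add: nth_append)
qed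

lemma legal_history_snoc:
  "legal_history r I (h @ [m]) \<longleftrightarrow> legal_history r I h \<and> legal_move r I h m"
  unfolding legal_history_def by (auto simp: nth_append less_Suc_eq)

lemma follows_history_snoc:
  "follows_history \<sigma> (h @ [m]) \<longleftrightarrow> follows_history \<sigma> h \<and> (even (length h) \<longrightarrow> m = \<sigma> h)"
  unfolding follows_history_def by (auto simp: nth_append less_Suc_eq)

definition legal_strategy ::
    "'a rel \<Rightarrow> 'a set set \<Rightarrow> (('a set \<times> 'a set) list \<Rightarrow> 'a set \<times> 'a set) \<Rightarrow> bool" where
  "legal_strategy r I \<sigma> \<longleftrightarrow>
     (\<forall>h. legal_history r I h \<and> follows_history \<sigma> h \<and> even (length h) \<longrightarrow> legal_move r I h (\<sigma> h))"

definition nonempty_to_move ::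
    "'a rel \<Rightarrow> 'a set set \<Rightarrow> (('a set \<times> 'a set) list \<Rightarrow> 'a set \<times> 'a set) \<Rightarrow> ('a set \<times> 'a set) list \<Rightarrow> bool" where
  "nonempty_to_move r I \<sigma> h \<longleftrightarrow> legal_history r I h \<and> follows_history \<sigma> h \<and> odd (length h)"

lemma legal_history_last_subset:
  assumes "legal_history r I h" and "k < length h"
  shows "fst (last h) \<subseteq> fst (h ! k) \<and> snd (last h) \<subseteq> snd (h ! k)"
  using assms
proof (induction h arbitrary: k rule: rev_induct)
  case Nil
  then show ?case by simp
next
  case (snoc m h)
  then have "legal_history r I h" and "legal_move r I h m"
    by (simp_all add: legal_history_snoc)
  show ?case
  proof (cases "k < length h")
    case True
    then have "h \<noteq> []"
      by auto
    then have "fst m \<subseteq> fst (last h) \<and> snd m \<subseteq> snd (last h)"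
      using \<open>legal_move r I h m\<close> unfolding legal_move_def by simp
    then show ?thesis
      using snoc.IH[OF \<open>legal_history r I h\<close> True] True by (auto simp: nth_append)
  next
    case False
    then have "k = length h"
      using snoc.prems(2) by simp
    then show ?thesis by simp
  qed
qed

lemma legal_history_last_move:
  assumes "legal_history r I h" and "h \<noteq> []"
  shows "legal_move r I (butlast h) (last h)"
proof -
  have "legal_history r I (butlast h @ [last h])"
    using assms by simp
  then show ?thesis
    by (simp add: legal_history_snoc)
qed

lemma legal_move_iff_refines:
  assumes "legal_history r I h" and "h \<noteq> []"
  shows "legal_move r I h Y \<longleftrightarrow> refines I Y (last h)"
  using legal_history_last_move[OF assms] assms(2) unfolding legal_move_def refines_def by blast

lemma nonempty_to_move_root:
  "legal_strategy r I \<sigma> \<Longrightarrow> nonempty_to_move r I \<sigma> [\<sigma> []]"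
  using legal_history_snoc[of r I "[]"] follows_history_snoc[of \<sigma> "[]"]
  unfolding legal_strategy_def nonempty_to_move_def legal_history_def follows_history_def
  by simp

lemma nonempty_to_move_extend:
  assumes "legal_strategy r I \<sigma>" and "nonempty_to_move r I \<sigma> h" and "legal_move r I h Y"
  shows "legal_move r I (h @ [Y]) (\<sigma> (h @ [Y]))"
    and "nonempty_to_move r I \<sigma> (h @ [Y, \<sigma> (h @ [Y])])"
proof -
  have "legal_history r I (h @ [Y])" and "follows_history \<sigma> (h @ [Y])" and "even (length (h @ [Y]))"
    using assms(2,3) unfolding nonempty_to_move_def
    by (simp_all add: legal_history_snoc follows_history_snoc)
  then show reply: "legal_move r I (h @ [Y]) (\<sigma> (h @ [Y]))"
    using assms(1) unfolding legal_strategy_def by blast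
  show "nonempty_to_move r I \<sigma> (h @ [Y, \<sigma> (h @ [Y])])"
    using legal_history_snoc[of r I "h @ [Y]"] follows_history_snoc[of \<sigma> "h @ [Y]"]
      \<open>legal_history r I (h @ [Y])\<close> \<open>follows_history \<sigma> (h @ [Y])\<close> \<open>even (length (h @ [Y]))\<close> reply
    unfolding nonempty_to_move_def by simp
qed

primrec rounds :: "('x list \<Rightarrow> 'x) \<Rightarrow> ('x list \<Rightarrow> 'x set) \<Rightarrow> nat \<Rightarrow> 'x list set" where
  "rounds \<sigma> Y 0 = {[\<sigma> []]}"
| "rounds \<sigma> Y (Suc n) = (\<Union>h \<in> rounds \<sigma> Y n. (\<lambda>y. h @ [y, \<sigma> (h @ [y])]) ` Y h)"

lemma countable_rounds: "(\<And>h. countable (Y h)) \<Longrightarrow> countable (rounds \<sigma> Y n)"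
  by (induction n) auto

lemma rounds_nonempty_to_move:
  assumes "legal_strategy r I \<sigma>"
    and "\<And>h Y. nonempty_to_move r I \<sigma> h \<Longrightarrow> Y \<in> YS h \<Longrightarrow> legal_move r I h Y"
    and "h \<in> rounds \<sigma> YS n"
  shows "nonempty_to_move r I \<sigma> h \<and> length h = 2 * n + 1"
  using assms(3)
proof (induction n arbitrary: h)
  case 0
  then show ?case
    using nonempty_to_move_root[OF assms(1)] by simp
next
  case (Suc n)
  then obtain h0 Y where "h0 \<in> rounds \<sigma> YS n" and "Y \<in> YS h0" and h: "h = h0 @ [Y, \<sigma> (h0 @ [Y])]"
    by auto
  then show ?case
    using Suc.IH assms(2) nonempty_to_move_extend(2)[OF assms(1)] by auto
qed

lemma play_through_points:
  assumes \<sigma>: "legal_strategy r I \<sigma>"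
    and YS: "\<And>h Y. nonempty_to_move r I \<sigma> h \<Longrightarrow> Y \<in> YS h \<Longrightarrow> legal_move r I h Y"
    and root: "\<alpha> \<in> fst (\<sigma> [])" "\<beta> \<in> snd (\<sigma> [])"
    and keep: "\<And>n h. h \<in> rounds \<sigma> YS n \<Longrightarrow> \<alpha> \<in> fst (last h) \<Longrightarrow> \<beta> \<in> snd (last h) \<Longrightarrow>
      \<exists>Y \<in> YS h. \<alpha> \<in> fst (\<sigma> (h @ [Y])) \<and> \<beta> \<in> snd (\<sigma> (h @ [Y]))"
  shows "\<exists>play. (\<forall>n. legal_move r I (map play [0..<n]) (play n)) \<and>
    (\<forall>n. even n \<longrightarrow> play n = \<sigma> (map play [0..<n])) \<and>
    \<alpha> \<in> (\<Inter>n. fst (play n)) \<and> \<beta> \<in> (\<Inter>n. snd (play n))"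
proof -
  define alive where "alive h \<longleftrightarrow> \<alpha> \<in> fst (last h) \<and> \<beta> \<in> snd (last h)" for h
  have "\<exists>hs. \<forall>n. (hs n \<in> rounds \<sigma> YS n \<and> alive (hs n)) \<and>
      (\<exists>Y. hs (Suc n) = hs n @ [Y, \<sigma> (hs n @ [Y])])"
  proof (rule dependent_nat_choice)
    show "\<exists>h. h \<in> rounds \<sigma> YS 0 \<and> alive h"
      using root unfolding alive_def by simp
  next
    fix h n
    assume "h \<in> rounds \<sigma> YS n \<and> alive h"
    then obtain Y where "Y \<in> YS h" and "alive (h @ [Y, \<sigma> (h @ [Y])])"
      using keep unfolding alive_def by fastforce
    then show "\<exists>h'. (h' \<in> rounds \<sigma> YS (Suc n) \<and> alive h') \<and>
        (\<exists>Y. h' = h @ [Y, \<sigma> (h @ [Y])])"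
      using \<open>h \<in> rounds \<sigma> YS n \<and> alive h\<close>
      by (intro exI[of _ "h @ [Y, \<sigma> (h @ [Y])]"]) auto
  qed
  then obtain hs where hs: "\<And>n. hs n \<in> rounds \<sigma> YS n" "\<And>n. alive (hs n)"
    and extend: "\<And>n. \<exists>Y. hs (Suc n) = hs n @ [Y, \<sigma> (hs n @ [Y])]"
    by blast
  have hs_to_move: "nonempty_to_move r I \<sigma> (hs n)" and hs_length: "length (hs n) = 2 * n + 1" for n
    using rounds_nonempty_to_move[OF \<sigma> YS hs(1)] by simp_all
  define play where "play k = hs k ! k" for k
  have play_prefix: "map play [0..<n] = take n (hs n)" for n
    unfolding play_def using extend hs_length by (intro extending_lists_diagonal) force+
  have "legal_move r I (map play [0..<n]) (play n)" for n
    using hs_to_move[of n] hs_length[of n]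
    unfolding play_prefix play_def nonempty_to_move_def legal_history_def by simp
  moreover have "play n = \<sigma> (map play [0..<n])" if "even n" for n
    using hs_to_move[of n] hs_length[of n] that
    unfolding play_prefix play_def nonempty_to_move_def follows_history_def by simp
  moreover have "\<alpha> \<in> fst (play n) \<and> \<beta> \<in> snd (play n)" for n
    using legal_history_last_subset[of r I "hs n" n] hs_to_move[of n] hs_length[of n] hs(2)[of n]
    unfolding play_def nonempty_to_move_def alive_def by auto
  ultimately show ?thesis
    by blast
qed

lemma nonempty_to_move_cover:
  assumes cover: "countably_covers_responses (Field r) I"
    and \<sigma>: "legal_strategy r I \<sigma>" and h: "nonempty_to_move r I \<sigma> h"
  shows "\<exists>YS N. countable YS \<and> (\<forall>Y \<in> YS. legal_move r I h Y) \<and> N \<in> I \<and>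
    (\<forall>\<alpha> \<in> fst (last h) - N. uncovered (snd (last h)) YS (\<lambda>Y. \<sigma> (h @ [Y])) \<alpha> \<in> I)"
proof -
  have "legal_history r I h" and "h \<noteq> []"
    using h unfolding nonempty_to_move_def by auto
  note legal_iff = legal_move_iff_refines[OF this]
  have "fst (last h) \<subseteq> Field r" and "snd (last h) \<subseteq> Field r"
    using legal_history_last_move[OF \<open>legal_history r I h\<close> \<open>h \<noteq> []\<close>]
    unfolding legal_move_def by simp_all
  moreover have "refines I (\<sigma> (h @ [Y])) Y" if "refines I Y (last h)" for Y
  proof -
    have "legal_move r I (h @ [Y]) (\<sigma> (h @ [Y]))"
      using nonempty_to_move_extend(1)[OF \<sigma> h] legal_iff that by blast
    then show ?thesis
      unfolding legal_move_def refines_def by simp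
  qed
  ultimately show ?thesis
    using countably_covers_responsesD[OF cover, of "last h" "\<lambda>Y. \<sigma> (h @ [Y])"]
    by (simp add: legal_iff)
qed

lemma covers_along_strategy:
  assumes cover: "countably_covers_responses (Field r) I" and \<sigma>: "legal_strategy r I \<sigma>"
  obtains YS N where "\<And>h. countable (YS h)"
    and "\<And>h Y. nonempty_to_move r I \<sigma> h \<Longrightarrow> Y \<in> YS h \<Longrightarrow> legal_move r I h Y"
    and "\<And>h. nonempty_to_move r I \<sigma> h \<Longrightarrow> N h \<in> I"
    and "\<And>h \<alpha>. nonempty_to_move r I \<sigma> h \<Longrightarrow> \<alpha> \<in> fst (last h) - N h \<Longrightarrow>
      uncovered (snd (last h)) (YS h) (\<lambda>Y. \<sigma> (h @ [Y])) \<alpha> \<in> I"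
proof -
  define covers where "covers h YS N \<longleftrightarrow> countable YS \<and> (nonempty_to_move r I \<sigma> h \<longrightarrow>
      (\<forall>Y \<in> YS. legal_move r I h Y) \<and> N \<in> I \<and>
      (\<forall>\<alpha> \<in> fst (last h) - N. uncovered (snd (last h)) YS (\<lambda>Y. \<sigma> (h @ [Y])) \<alpha> \<in> I))"
    for h YS N
  have "\<forall>h. \<exists>YS N. covers h YS N"
  proof
    fix h
    show "\<exists>YS N. covers h YS N"
    proof (cases "nonempty_to_move r I \<sigma> h")
      case True
      then show ?thesis
        using nonempty_to_move_cover[OF cover \<sigma> True] unfolding covers_def by simp
    next
      case False
      then have "covers h {} {}"
        unfolding covers_def by simp
      then show ?thesis
        by blast
    qed
  qed
  then have "\<exists>YS. \<forall>h. \<exists>N. covers h (YS h) N"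
    by (rule choice)
  then obtain YS where "\<forall>h. \<exists>N. covers h (YS h) N"
    by blast
  then have "\<exists>N. \<forall>h. covers h (YS h) (N h)"
    by (rule choice)
  then obtain N where covers: "\<And>h. covers h (YS h) (N h)"
    by blast
  show thesis
  proof (rule that)
    show "countable (YS h)" for h
      using covers[of h] unfolding covers_def by simp
    show "legal_move r I h Y" if "nonempty_to_move r I \<sigma> h" and "Y \<in> YS h" for h Y
      using covers[of h] that unfolding covers_def by simp
    show "N h \<in> I" if "nonempty_to_move r I \<sigma> h" for h
      using covers[of h] that unfolding covers_def by simp
    show "uncovered (snd (last h)) (YS h) (\<lambda>Y. \<sigma> (h @ [Y])) \<alpha> \<in> I"
      if "nonempty_to_move r I \<sigma> h" and "\<alpha> \<in> fst (last h) - N h" for h \<alpha>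
      using covers[of h] that unfolding covers_def by simp
  qed
qed

lemma legal_strategy_beaten:
  assumes "Card_order r" and "ideal_on r I"
    and countable_Union: "\<And>F. countable F \<Longrightarrow> F \<subseteq> I \<Longrightarrow> \<Union>F \<in> I"
    and bounded: "\<And>\<alpha>. \<alpha> \<in> Field r \<Longrightarrow> under r \<alpha> \<in> I"
    and cover: "countably_covers_responses (Field r) I"
    and \<sigma>: "legal_strategy r I \<sigma>"
  shows "\<exists>play. (\<forall>n. legal_move r I (map play [0..<n]) (play n)) \<and>
    (\<forall>n. even n \<longrightarrow> play n = \<sigma> (map play [0..<n])) \<and> nonempty_wins r play"
proof -
  have ideal_down: "\<And>A B. A \<in> I \<Longrightarrow> B \<subseteq> A \<Longrightarrow> B \<in> I"
    using assms(2) unfolding ideal_on_def by blast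
  obtain YS N where YS_countable: "\<And>h. countable (YS h)"
    and YS_legal: "\<And>h Y. nonempty_to_move r I \<sigma> h \<Longrightarrow> Y \<in> YS h \<Longrightarrow> legal_move r I h Y"
    and N: "\<And>h. nonempty_to_move r I \<sigma> h \<Longrightarrow> N h \<in> I"
    and lost: "\<And>h \<alpha>. nonempty_to_move r I \<sigma> h \<Longrightarrow> \<alpha> \<in> fst (last h) - N h \<Longrightarrow>
      uncovered (snd (last h)) (YS h) (\<lambda>Y. \<sigma> (h @ [Y])) \<alpha> \<in> I"
    using covers_along_strategy[OF cover \<sigma>] by blast
  define T where "T = (\<Union>n. rounds \<sigma> YS n)"
  have "countable T"
    unfolding T_def using countable_rounds[of YS, OF YS_countable] by (intro countable_UN) auto
  have T_to_move: "nonempty_to_move r I \<sigma> h" if "h \<in> T" for h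
    using that rounds_nonempty_to_move[OF \<sigma> YS_legal] unfolding T_def by blast
  have "legal_move r I [] (\<sigma> [])"
    using \<sigma> unfolding legal_strategy_def legal_history_def follows_history_def by simp
  then have A: "fst (\<sigma> []) \<subseteq> Field r" "fst (\<sigma> []) \<notin> I"
    and B: "snd (\<sigma> []) \<subseteq> Field r" "snd (\<sigma> []) \<notin> I"
    unfolding legal_move_def by simp_all
  have "\<Union>(N ` T) \<in> I"
    using N T_to_move \<open>countable T\<close> by (intro countable_Union) auto
  then have "\<not> fst (\<sigma> []) \<subseteq> \<Union>(N ` T)"
    using A(2) ideal_down by blast
  then obtain \<alpha> where \<alpha>: "\<alpha> \<in> fst (\<sigma> [])" "\<alpha> \<notin> \<Union>(N ` T)"
    by blast
  define lost_at where "lost_at h =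
      (if \<alpha> \<in> fst (last h) then uncovered (snd (last h)) (YS h) (\<lambda>Y. \<sigma> (h @ [Y])) \<alpha> else {})" for h
  have "lost_at h \<in> I" if "h \<in> T" for h
    using lost[OF T_to_move[OF that]] \<alpha>(2) that assms(2)
    unfolding lost_at_def ideal_on_def by auto
  then have "\<Union>(insert (under r \<alpha>) (lost_at ` T)) \<in> I"
    using \<open>countable T\<close> bounded[of \<alpha>] A(1) \<alpha>(1) by (intro countable_Union) auto
  then have "\<not> snd (\<sigma> []) \<subseteq> \<Union>(insert (under r \<alpha>) (lost_at ` T))"
    using B(2) ideal_down by blast
  then obtain \<beta> where \<beta>: "\<beta> \<in> snd (\<sigma> [])" "\<beta> \<notin> under r \<alpha>" "\<beta> \<notin> \<Union>(lost_at ` T)"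
    by blast
  have "strict_lt r \<alpha> \<beta>"
    using strict_lt_if_not_under[OF assms(1)] A(1) B(1) \<alpha>(1) \<beta>(1,2) by blast
  have "\<exists>play. (\<forall>n. legal_move r I (map play [0..<n]) (play n)) \<and>
      (\<forall>n. even n \<longrightarrow> play n = \<sigma> (map play [0..<n])) \<and>
      \<alpha> \<in> (\<Inter>n. fst (play n)) \<and> \<beta> \<in> (\<Inter>n. snd (play n))"
  proof (rule play_through_points[OF \<sigma> YS_legal \<alpha>(1) \<beta>(1)])
    fix n h
    assume "h \<in> rounds \<sigma> YS n" and "\<alpha> \<in> fst (last h)" and "\<beta> \<in> snd (last h)"
    then have "\<beta> \<notin> uncovered (snd (last h)) (YS h) (\<lambda>Y. \<sigma> (h @ [Y])) \<alpha>"
      using \<beta>(3) unfolding lost_at_def T_def by auto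
    then show "\<exists>Y \<in> YS h. \<alpha> \<in> fst (\<sigma> (h @ [Y])) \<and> \<beta> \<in> snd (\<sigma> (h @ [Y]))"
      using \<open>\<beta> \<in> snd (last h)\<close> unfolding uncovered_def by blast
  qed
  then obtain play where "\<forall>n. legal_move r I (map play [0..<n]) (play n)"
    and "\<forall>n. even n \<longrightarrow> play n = \<sigma> (map play [0..<n])"
    and "\<alpha> \<in> (\<Inter>n. fst (play n))" and "\<beta> \<in> (\<Inter>n. snd (play n))"
    by blast
  moreover have "nonempty_wins r play"
    unfolding nonempty_wins_def
    using \<open>strict_lt r \<alpha> \<beta>\<close> \<open>\<alpha> \<in> (\<Inter>n. fst (play n))\<close> \<open>\<beta> \<in> (\<Inter>n. snd (play n))\<close> by blast
  ultimately show ?thesis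
    by blast
qed

lemma two_precipitous_if_countably_covers_responses:
  assumes "Card_order r" and "ideal_on r I"
    and "\<And>F. countable F \<Longrightarrow> F \<subseteq> I \<Longrightarrow> \<Union>F \<in> I"
    and "\<And>\<alpha>. \<alpha> \<in> Field r \<Longrightarrow> under r \<alpha> \<in> I"
    and "countably_covers_responses (Field r) I"
  shows "two_precipitous r I"
  unfolding two_precipitous_def
proof
  assume "\<exists>\<sigma>. empty_winning_strategy r I \<sigma>"
  then obtain \<sigma> where "legal_strategy r I \<sigma>"
    and no_win: "\<And>play. \<forall>n. legal_move r I (map play [0..<n]) (play n) \<Longrightarrow>
      \<forall>n. even n \<longrightarrow> play n = \<sigma> (map play [0..<n]) \<Longrightarrow> \<not> nonempty_wins r play"
    unfolding empty_winning_strategy_def legal_strategy_def by blast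
  then show False
    using legal_strategy_beaten[OF assms] by blast
qed

theorem mainTheorem7:
  fixes r :: "'a rel" and I :: "'a set set" and L :: "'l set"
  assumes "Card_order r" and "regularCard r" and "(natLeq, r) \<in> ordLess"
    and "ideal_on r I" and "kappa_complete r I" and "normal_ideal r I"
    and "quotient_iso (Field r) I (RO (Add_conds L) Add_le)"
  shows "two_precipitous r I"
proof -
  note countable_Union = kappa_complete_countable_Union[OF assms(5,3)]
  obtain f where "cohen_quotient (Field r) I L f"
    using quotient_iso_cohen_quotient[OF assms(4) countable_Union assms(7)] .
  then have "countably_covers_responses (Field r) I"
    by (rule cohen_quotient.countably_covers_responses)
  with assms(1,4) countable_Union kappa_complete_under_in_ideal[OF assms(1,5,4)] show ?thesis
    by (rule two_precipitous_if_countably_covers_responses)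
qed

end
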